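(* Let $n\le 3$ and $R=\mathbb{C}[z_1,\dots,z_n]$. Let $f_1,\dots,f_P,g\in R$ be homogeneous polynomials of degree $m$ with $\{f_1,\dots,f_P,g\}$ linearly independent over $\mathbb{C}$, and let $I^+=\langle f_1,\dots,f_P\rangle$. If $\langle g\rangle_{m+1}\subseteq I^+_{m+1}$, then $P\ge n$.
   Context: For a homogeneous ideal $I\subseteq R$, $I_{d}$ denotes its homogeneous component of degree $d$. *)

theory Defs
  imports Complex_Main "HOL-Library.Poly_Mapping" "HOL-Library.Cardinality"
begin

text \<open>Polynomials in the variables indexed by the finite type 'n with complex
coefficients: finitely supported maps from monomials (exponent vectors,
maps from n to nat) to coefficients. Multiplication is the convolution product.\<close>

type_synonym 'n cpoly = "('n \<Rightarrow>\<^sub>0 nat) \<Rightarrow>\<^sub>0 complex"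

definition mon_deg :: "('n \<Rightarrow>\<^sub>0 nat) \<Rightarrow> nat" where
  "mon_deg a = (\<Sum>i\<in>Poly_Mapping.keys a. Poly_Mapping.lookup a i)"

text \<open>Homogeneous of degree d (the zero polynomial is homogeneous of every degree).\<close>
definition homogeneous :: "nat \<Rightarrow> 'n cpoly \<Rightarrow> bool" where
  "homogeneous d p \<longleftrightarrow> (\<forall>a\<in>Poly_Mapping.keys p. mon_deg a = d)"

definition cscale :: "complex \<Rightarrow> 'n cpoly \<Rightarrow> 'n cpoly" where
  "cscale c p = Poly_Mapping.map (\<lambda>x. c * x) p"

definition gen_ideal :: "nat \<Rightarrow> (nat \<Rightarrow> 'n cpoly) \<Rightarrow> 'n cpoly set" where
  "gen_ideal P f = {\<Sum>i<P. h i * f i | h. True}"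

definition hom_comp :: "'n cpoly set \<Rightarrow> nat \<Rightarrow> 'n cpoly set" where
  "hom_comp I d = {p \<in> I. homogeneous d p}"

definition lin_indep_fam :: "nat \<Rightarrow> (nat \<Rightarrow> 'n cpoly) \<Rightarrow> 'n cpoly \<Rightarrow> bool" where
  "lin_indep_fam P f g \<longleftrightarrow>
     (\<forall>c d. (\<Sum>i<P. cscale (c i) (f i)) + cscale d g = 0 \<longrightarrow> (\<forall>i<P. c i = 0) \<and> d = 0)"

end

(*
  Multiplying g by a variable z_v lands in the degree m + 1 part of I^+, so comparing
  homogeneous parts gives relations z_v g = l_1 f_1 + ... + l_P f_P with linear forms l_i.
  For P < n these relations force g into the linear span of f_1, ..., f_P, contradicting
  linear independence. (Conceptually: for P <= 2 the module R/I^+ has projective dimension at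
  most P < n, so the maximal ideal is not an associated prime of it.)

  P = 0 gives z_v g = 0. For P = 1 and two variables z_v, z_w, the relations z_v g = l f and
  z_w g = l' f give z_w l = z_v l', hence l = c z_v and g = c f.

  For P = 2 and n = 3 the polynomial ring is a GCD domain, since it embeds into
  complex poly poly poly. Write z_k g = a_k f_1 + b_k f_2. After dividing g, f_1, f_2 by their
  gcd, the minors z_j a_k - z_k a_j are multiples f_2 s_i, and s is a syzygy of (z_0, z_1, z_2)
  of degree 2 - m. By exactness of the Koszul complex in low degree s = u x z, and s = 0 for
  m >= 2. Then a_0 + u_0 f_2 and b_0 - u_0 f_1 are multiples of z_0, and substituting into
  z_0 g = a_0 f_1 + b_0 f_2 gives g = c f_1 + d f_2.
*)
theory Submission
  imports Defs "HOL-Computational_Algebra.Polynomial_Factorial"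
    "HOL-Computational_Algebra.Field_as_Ring"
begin

abbreviation lookup where "lookup \<equiv> Poly_Mapping.lookup"
abbreviation keys where "keys \<equiv> Poly_Mapping.keys"

abbreviation const :: "complex \<Rightarrow> 'n cpoly" where
  "const c \<equiv> Poly_Mapping.single 0 c"

abbreviation varexp :: "'n \<Rightarrow> ('n \<Rightarrow>\<^sub>0 nat)" where
  "varexp v \<equiv> Poly_Mapping.single v (Suc 0)"

abbreviation cvar :: "complex \<Rightarrow> 'n \<Rightarrow> 'n cpoly" where
  "cvar c v \<equiv> Poly_Mapping.single (varexp v) c"

abbreviation var :: "'n \<Rightarrow> 'n cpoly" where
  "var v \<equiv> cvar 1 v"

lemma const_mult_var: "const c * var v = cvar c v"
  by (simp add: mult_single)

lemma cscale_eq_const_mult: "cscale c p = const c * p"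
  by (simp add: cscale_def mult_map_scale_conv_mult)

lemma var_ne_0: "var v \<noteq> 0"
  by (metis lookup_single_eq lookup_zero one_neq_zero)

lemma poly_mapping_sum_single: "p = (\<Sum>a\<in>keys p. Poly_Mapping.single a (lookup p a))"
  by (rule poly_mapping_eqI) (simp add: lookup_sum lookup_single when_def in_keys_iff)

lemma lookup_single_mult:
  "lookup (Poly_Mapping.single a c * p) b =
     (\<Sum>d\<in>keys p. (c * lookup p d) when a + d = b)"
proof -
  have "Poly_Mapping.single a c * p =
      (\<Sum>d\<in>keys p. Poly_Mapping.single (a + d) (c * lookup p d))"
    by (subst (1) poly_mapping_sum_single[of p]) (simp add: sum_distrib_left mult_single)
  then show ?thesis by (simp add: lookup_sum lookup_single)
qed

lemma lookup_single_mult_add: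
  "lookup (Poly_Mapping.single a c * (p :: 'n cpoly)) (a + b) = c * lookup p b"
  by (simp add: lookup_single_mult when_def in_keys_iff)

lemma lookup_var_mult_add: "lookup (var v * p) (varexp v + a) = lookup p a"
  using lookup_single_mult_add[of "varexp v" 1 p a] by simp

lemma lookup_var_mult_eq_0: "lookup a v = 0 \<Longrightarrow> lookup (var v * p) a = 0"
  by (auto simp: lookup_single_mult when_def lookup_add intro!: sum.neutral)

subsection \<open>Homogeneous components\<close>

lemma mon_deg_conv_sum: "mon_deg (a::'n::finite \<Rightarrow>\<^sub>0 nat) = (\<Sum>i\<in>UNIV. lookup a i)"
  unfolding mon_deg_def by (rule sum.mono_neutral_left) (auto simp: in_keys_iff)

lemma mon_deg_add: "mon_deg (a + b :: 'n::finite \<Rightarrow>\<^sub>0 nat) = mon_deg a + mon_deg b"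
  by (simp add: mon_deg_conv_sum lookup_add sum.distrib)

lemma mon_deg_single [simp]: "mon_deg (Poly_Mapping.single v k) = k"
  by (simp add: mon_deg_def)

lemma mon_deg_eq_0_iff: "mon_deg (a::'n::finite \<Rightarrow>\<^sub>0 nat) = 0 \<longleftrightarrow> a = 0"
  by (auto simp: mon_deg_conv_sum poly_mapping_eq_iff fun_eq_iff)

lemma mon_deg_eq_1_imp:
  assumes "mon_deg (a::'n::finite \<Rightarrow>\<^sub>0 nat) = 1"
  obtains u where "a = varexp u"
proof -
  have "a \<noteq> 0" using assms by (auto simp: mon_deg_def)
  then obtain u where u: "lookup a u \<noteq> 0" by (metis poly_mapping_eqI lookup_zero)
  have "1 = (\<Sum>i\<in>UNIV. lookup a i)" using assms by (simp add: mon_deg_conv_sum)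
  also have "\<dots> = lookup a u + (\<Sum>i\<in>UNIV - {u}. lookup a i)"
    by (simp add: sum.remove)
  finally have "1 = lookup a u + (\<Sum>i\<in>UNIV - {u}. lookup a i)" .
  then have "lookup a u = 1" "(\<Sum>i\<in>UNIV - {u}. lookup a i) = 0"
    using u by linarith+
  then have "a = varexp u"
    by (intro poly_mapping_eqI) (auto simp: lookup_single when_def)
  then show ?thesis by (rule that)
qed

definition hom_part :: "nat \<Rightarrow> 'n cpoly \<Rightarrow> 'n cpoly" where
  "hom_part d p = Abs_poly_mapping (\<lambda>a. if mon_deg a = d then lookup p a else 0)"

lemma lookup_hom_part: "lookup (hom_part d p) a = (if mon_deg a = d then lookup p a else 0)"
proof -
  have "finite {a. (if mon_deg a = d then lookup p a else 0) \<noteq> 0}"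
    by (rule finite_subset[of _ "keys p"]) (auto simp: in_keys_iff)
  then show ?thesis unfolding hom_part_def by simp
qed

lemma hom_part_add: "hom_part d (p + q) = hom_part d p + hom_part d q"
  by (rule poly_mapping_eqI) (simp add: lookup_hom_part lookup_add)

lemma hom_part_diff: "hom_part d (p - q) = hom_part d p - hom_part d q"
  by (rule poly_mapping_eqI) (simp add: lookup_hom_part lookup_minus)

lemma hom_part_0 [simp]: "hom_part d 0 = 0"
  by (rule poly_mapping_eqI) (simp add: lookup_hom_part)

lemma hom_part_sum: "hom_part d (sum F S) = (\<Sum>i\<in>S. hom_part d (F i))"
  by (induction S rule: infinite_finite_induct) (auto simp: hom_part_add)

lemma homogeneous_iff_hom_part: "homogeneous d p \<longleftrightarrow> hom_part d p = p"
  unfolding homogeneous_def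
  by (auto simp: poly_mapping_eq_iff fun_eq_iff lookup_hom_part in_keys_iff split: if_splits)

lemma hom_part_homogeneous: "homogeneous d p \<Longrightarrow> hom_part e p = (if e = d then p else 0)"
  by (auto simp: homogeneous_def poly_mapping_eq_iff fun_eq_iff lookup_hom_part in_keys_iff)

lemma homogeneous_hom_part: "homogeneous d (hom_part d p)"
  unfolding homogeneous_def by (auto simp: in_keys_iff lookup_hom_part split: if_splits)

lemma hom_part_ne_0_iff: "hom_part i p \<noteq> 0 \<longleftrightarrow> i \<in> mon_deg ` keys p"
  by (auto simp: poly_mapping_eq_iff fun_eq_iff lookup_hom_part in_keys_iff split: if_splits)

lemma homogeneous_0 [simp]: "homogeneous d 0"
  by (simp add: homogeneous_def)

lemma homogeneous_cvar: "homogeneous 1 (cvar c v :: 'n::finite cpoly)"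
  by (simp add: homogeneous_def)

lemma homogeneous_0_imp_const: "homogeneous 0 (p::'n::finite cpoly) \<Longrightarrow> p = const (lookup p 0)"
  unfolding homogeneous_def
  by (rule poly_mapping_eqI) (auto simp: lookup_single when_def in_keys_iff mon_deg_eq_0_iff)

lemma homogeneous_unique:
  assumes "homogeneous i p" "homogeneous j p" "p \<noteq> 0"
  shows "i = j"
  using hom_part_homogeneous[OF assms(1), of j] hom_part_homogeneous[OF assms(2), of j] assms(3)
  by (auto split: if_splits)

lemma homogeneous_add:
  "homogeneous d p \<Longrightarrow> homogeneous d q \<Longrightarrow> homogeneous d (p + q)"
  by (simp add: homogeneous_iff_hom_part hom_part_add)

lemma homogeneous_diff:
  "homogeneous d p \<Longrightarrow> homogeneous d q \<Longrightarrow> homogeneous d (p - q)"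
  by (simp add: homogeneous_iff_hom_part hom_part_diff)

lemma homogeneous_mult:
  assumes "homogeneous i (p::'n::finite cpoly)" "homogeneous j q"
  shows "homogeneous (i + j) (p * q)"
  unfolding homogeneous_def
proof
  fix c assume "c \<in> keys (p * q)"
  then obtain a b where "c = a + b" "a \<in> keys p" "b \<in> keys q"
    using keys_mult by blast
  then show "mon_deg c = i + j" using assms by (simp add: homogeneous_def mon_deg_add)
qed

lemma homogeneous_var_mult:
  assumes "homogeneous d (p::'n::finite cpoly)"
  shows "homogeneous (d + 1) (var v * p)"
  using homogeneous_mult[OF homogeneous_cvar assms] by (simp add: add.commute)

lemma homogeneous_const: "homogeneous 0 (const c)"
  by (simp add: homogeneous_def mon_deg_def)

lemma homogeneous_const_mult:
  assumes "homogeneous d (p::'n::finite cpoly)"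
  shows "homogeneous d (const c * p)"
  using homogeneous_mult[OF homogeneous_const assms] by simp

lemma hom_part_decomp:
  assumes "finite D" "mon_deg ` keys p \<subseteq> D"
  shows "p = (\<Sum>i\<in>D. hom_part i p)"
proof (rule poly_mapping_eqI)
  fix a
  have "lookup (\<Sum>i\<in>D. hom_part i p) a = (if mon_deg a \<in> D then lookup p a else 0)"
    using assms(1) by (simp add: lookup_sum lookup_hom_part)
  also have "\<dots> = lookup p a" using assms(2) by (metis image_eqI in_keys_iff subsetD)
  finally show "lookup p a = lookup (\<Sum>i\<in>D. hom_part i p) a" by simp
qed

lemma hom_part_mult_homogeneous:
  fixes p q :: "'n::finite cpoly"
  assumes q: "homogeneous j q"
  shows "hom_part e (p * q) = (if j \<le> e then hom_part (e - j) p * q else 0)"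
proof -
  define D where "D = mon_deg ` keys p"
  have "p * q = (\<Sum>i\<in>D. hom_part i p * q)"
    by (subst hom_part_decomp[of D p]) (simp_all add: D_def sum_distrib_right)
  then have "hom_part e (p * q) = (\<Sum>i\<in>D. hom_part e (hom_part i p * q))"
    by (simp add: hom_part_sum)
  also have "\<dots> = (\<Sum>i\<in>D. if i = e - j \<and> j \<le> e then hom_part i p * q else 0)"
  proof (intro sum.cong refl)
    fix i
    have "e = i + j \<longleftrightarrow> i = e - j \<and> j \<le> e" by auto
    then show "hom_part e (hom_part i p * q) = (if i = e - j \<and> j \<le> e then hom_part i p * q else 0)"
      using hom_part_homogeneous[OF homogeneous_mult[OF homogeneous_hom_part[of i p] q], of e] by simp
  qed
  also have "\<dots> = (if j \<le> e then hom_part (e - j) p * q else 0)"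
    using hom_part_ne_0_iff[of "e - j" p] by (auto simp: D_def)
  finally show ?thesis .
qed

lemma hom_part_mult:
  fixes p q :: "'n::finite cpoly"
  shows "hom_part e (p * q) =
    (\<Sum>i\<in>mon_deg ` keys q. if i \<le> e then hom_part (e - i) p * hom_part i q else 0)"
proof -
  have "p * q = (\<Sum>i\<in>mon_deg ` keys q. p * hom_part i q)"
    by (subst hom_part_decomp[of "mon_deg ` keys q" q]) (simp_all add: sum_distrib_left)
  then show ?thesis
    by (simp add: hom_part_sum hom_part_mult_homogeneous[OF homogeneous_hom_part])
qed

lemma hom_part_mult_extreme:
  fixes p q :: "'n::finite cpoly"
  assumes j: "j \<in> mon_deg ` keys q"
    and unique: "\<And>i' j'. i' \<in> mon_deg ` keys p \<Longrightarrow> j' \<in> mon_deg ` keys q \<Longrightarrow>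
      i' + j' = i + j \<Longrightarrow> j' = j"
  shows "hom_part (i + j) (p * q) = hom_part i p * hom_part j q"
proof -
  have "hom_part (i + j) (p * q) =
      (\<Sum>j'\<in>mon_deg ` keys q. if j' = j then hom_part i p * hom_part j q else 0)"
    unfolding hom_part_mult
  proof (intro sum.cong refl)
    fix j' assume j': "j' \<in> mon_deg ` keys q"
    show "(if j' \<le> i + j then hom_part (i + j - j') p * hom_part j' q else 0) =
        (if j' = j then hom_part i p * hom_part j q else 0)"
    proof (cases "j' = j")
      case False
      then have "hom_part (i + j - j') p = 0" if "j' \<le> i + j"
        using unique[OF _ j', of "i + j - j'"] that hom_part_ne_0_iff[of "i + j - j'" p] by auto
      with False show ?thesis by auto
    qed simp
  qed
  also have "\<dots> = hom_part i p * hom_part j q" using j by simp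
  finally show ?thesis .
qed

subsection \<open>Embedding into iterated univariate polynomials\<close>

text \<open>A coding of the variables by 0, 1, 2 turns z_v into the variable number code v of
  complex poly poly poly, number 0 being the innermost one. For an injective coding this is an
  injective ring homomorphism, bijective if the coding is onto: it provides cancellation and
  gcds for polynomials in at most three variables.\<close>

definition coded_exp :: "('n \<Rightarrow> nat) \<Rightarrow> ('n::finite \<Rightarrow>\<^sub>0 nat) \<Rightarrow> nat \<Rightarrow> nat" where
  "coded_exp code a k = (\<Sum>v\<in>{v. code v = k}. lookup a v)"

definition poly3_monom ::
  "('n \<Rightarrow> nat) \<Rightarrow> ('n::finite \<Rightarrow>\<^sub>0 nat) \<Rightarrow> complex \<Rightarrow> complex poly poly poly" where
  "poly3_monom code a c =
     monom (monom (monom c (coded_exp code a 0)) (coded_exp code a 1)) (coded_exp code a 2)"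

definition poly3 :: "('n \<Rightarrow> nat) \<Rightarrow> 'n::finite cpoly \<Rightarrow> complex poly poly poly" where
  "poly3 code p = (\<Sum>a\<in>keys p. poly3_monom code a (lookup p a))"

lemma coded_exp_add: "coded_exp code (a + b) k = coded_exp code a k + coded_exp code b k"
  by (simp add: coded_exp_def lookup_add sum.distrib)

lemma poly3_monom_mult:
  "poly3_monom code a c * poly3_monom code b d = poly3_monom code (a + b) (c * d)"
  by (simp add: poly3_monom_def mult_monom coded_exp_add)

lemma poly3_monom_0 [simp]: "poly3_monom code a 0 = 0"
  by (simp add: poly3_monom_def)

lemma poly3_monom_add:
  "poly3_monom code a c + poly3_monom code a d = poly3_monom code a (c + d)"
  by (simp add: poly3_monom_def add_monom)

lemma poly3_conv_sum:
  assumes "finite S" "keys p \<subseteq> S"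
  shows "poly3 code p = (\<Sum>a\<in>S. poly3_monom code a (lookup p a))"
  unfolding poly3_def
  by (rule sum.mono_neutral_left[OF assms]) (auto simp: in_keys_iff)

lemma poly3_add: "poly3 code (p + q) = poly3 code p + poly3 code q"
proof -
  let ?S = "keys p \<union> keys q"
  have "poly3 code (p + q) = (\<Sum>a\<in>?S. poly3_monom code a (lookup (p + q) a))"
    by (rule poly3_conv_sum) (use keys_add[of p q] in auto)
  also have "\<dots> = (\<Sum>a\<in>?S. poly3_monom code a (lookup p a)) +
      (\<Sum>a\<in>?S. poly3_monom code a (lookup q a))"
    by (simp add: lookup_add poly3_monom_add flip: sum.distrib)
  also have "\<dots> = poly3 code p + poly3 code q"
    using poly3_conv_sum[of ?S p code] poly3_conv_sum[of ?S q code] by simp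
  finally show ?thesis .
qed

lemma poly3_0 [simp]: "poly3 code 0 = 0"
  by (simp add: poly3_def)

lemma poly3_single: "poly3 code (Poly_Mapping.single a c) = poly3_monom code a c"
  by (simp add: poly3_def)

lemma poly3_sum: "poly3 code (sum F S) = (\<Sum>i\<in>S. poly3 code (F i))"
  by (induction S rule: infinite_finite_induct) (auto simp: poly3_add)

lemma poly3_mult: "poly3 code (p * q) = poly3 code p * poly3 code q"
proof -
  have "p * q = (\<Sum>a\<in>keys p. \<Sum>b\<in>keys q.
      Poly_Mapping.single (a + b) (lookup p a * lookup q b))"
    by (subst poly_mapping_sum_single[of p], subst poly_mapping_sum_single[of q])
      (simp add: sum_product mult_single)
  then have "poly3 code (p * q) = (\<Sum>a\<in>keys p. \<Sum>b\<in>keys q.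
      poly3_monom code a (lookup p a) * poly3_monom code b (lookup q b))"
    by (simp add: poly3_sum poly3_single poly3_monom_mult)
  then show ?thesis by (simp add: poly3_def sum_product)
qed

lemma poly3_1: "poly3 code 1 = 1"
proof -
  have "poly3 code 1 = poly3_monom code 0 1" by (metis poly3_single single_one)
  also have "\<dots> = 1" by (simp add: poly3_monom_def coded_exp_def monom_0 flip: one_pCons)
  finally show ?thesis .
qed

lemma poly3_range_sum:
  assumes "\<forall>x\<in>A. \<exists>p. poly3 code p = F x"
  shows "\<exists>p. poly3 code p = sum F A"
  using assms
proof (induction A rule: infinite_finite_induct)
  case (insert x A)
  then obtain p q where "poly3 code p = F x" "poly3 code q = sum F A" by auto
  then show ?case using insert by (auto intro!: exI[of _ "p + q"] simp: poly3_add)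
qed (auto intro: exI[of _ 0])

locale var_coding =
  fixes code :: "'n::finite \<Rightarrow> nat"
  assumes inj_code: "inj code" and code_less_3: "code v < 3"
begin

lemma coded_exp_code: "coded_exp code a (code u) = lookup a u"
proof -
  have "{v. code v = code u} = {u}" using inj_code by (auto dest: injD)
  then show ?thesis by (simp add: coded_exp_def)
qed

lemma coded_exp_inject:
  assumes "coded_exp code a 0 = coded_exp code b 0" "coded_exp code a 1 = coded_exp code b 1"
    "coded_exp code a 2 = coded_exp code b 2"
  shows "a = b"
proof (rule poly_mapping_eqI)
  fix u
  have "code u = 0 \<or> code u = 1 \<or> code u = 2" using code_less_3[of u] by auto
  then have "coded_exp code a (code u) = coded_exp code b (code u)" using assms by auto
  then show "lookup a u = lookup b u" by (simp add: coded_exp_code)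
qed

definition coeff3 :: "('n \<Rightarrow>\<^sub>0 nat) \<Rightarrow> complex poly poly poly \<Rightarrow> complex" where
  "coeff3 a t = coeff (coeff (coeff t (coded_exp code a 2)) (coded_exp code a 1)) (coded_exp code a 0)"

lemma coeff3_poly3: "coeff3 a (poly3 code p) = lookup p a"
proof -
  have "coeff3 a (poly3_monom code b c) = (if a = b then c else 0)" for b c
    unfolding coeff3_def poly3_monom_def using coded_exp_inject[of a b] by auto
  then have "coeff3 a (poly3 code p) = (\<Sum>b\<in>keys p. if a = b then lookup p b else 0)"
    by (simp add: poly3_def coeff3_def coeff_sum)
  then show ?thesis by (simp add: in_keys_iff)
qed

lemma poly3_inject: "poly3 code p = poly3 code q \<longleftrightarrow> p = q"
proof
  assume "poly3 code p = poly3 code q"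
  then show "p = q" by (intro poly_mapping_eqI) (metis coeff3_poly3)
qed simp

end

lemma cpoly_mult_eq_0_iff:
  assumes "CARD('n::finite) \<le> 3"
  shows "(p::'n cpoly) * q = 0 \<longleftrightarrow> p = 0 \<or> q = 0"
proof -
  obtain e :: "'n \<Rightarrow> nat" where e: "bij_betw e UNIV {..<CARD('n)}"
    using bij_betw_iff_card[of "UNIV::'n set" "{..<CARD('n)}"] by auto
  interpret var_coding e
  proof
    show "inj e" using e by (simp add: bij_betw_def)
    show "e v < 3" for v
      using e assms by (metis bij_betwE UNIV_I lessThan_iff order_less_le_trans)
  qed
  show ?thesis
    using poly3_inject[of "p * q" 0] poly3_inject[of p 0] poly3_inject[of q 0]
    by (auto simp: poly3_mult)
qed

definition no_common_factor :: "'n cpoly \<Rightarrow> 'n cpoly \<Rightarrow> 'n cpoly \<Rightarrow> bool" where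
  "no_common_factor p q r \<longleftrightarrow> (\<forall>h. h dvd p \<longrightarrow> h dvd q \<longrightarrow> h dvd r \<longrightarrow> h dvd 1)"

locale var_coding_onto = var_coding code for code :: "'n::finite \<Rightarrow> nat" +
  assumes code_onto: "k < 3 \<Longrightarrow> \<exists>v. code v = k"
begin

lemma poly3_monom_surj: "\<exists>p. poly3 code p = monom (monom (monom c i) j) k"
proof -
  obtain v0 v1 v2 where v: "code v0 = 0" "code v1 = 1" "code v2 = 2"
    using code_onto[of 0] code_onto[of 1] code_onto[of 2] by auto
  define a where "a = Poly_Mapping.single v0 i + Poly_Mapping.single v1 j + Poly_Mapping.single v2 k"
  have "v0 \<noteq> v1" "v0 \<noteq> v2" "v1 \<noteq> v2" using v by auto
  then have "coded_exp code a 0 = i" "coded_exp code a 1 = j" "coded_exp code a 2 = k"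
    using coded_exp_code[of a v0] coded_exp_code[of a v1] coded_exp_code[of a v2] v
    by (auto simp: a_def lookup_add lookup_single)
  then have "poly3 code (Poly_Mapping.single a c) = monom (monom (monom c i) j) k"
    by (simp add: poly3_single poly3_monom_def)
  then show ?thesis by blast
qed

lemma poly3_surj: "\<exists>p. poly3 code p = t"
proof -
  have monom2: "\<exists>p. poly3 code p = monom (monom s j) k" for s :: "complex poly" and j k
  proof -
    have "monom (monom s j) k = (\<Sum>i\<le>degree s. monom (monom (monom (coeff s i) i) j) k)"
      by (subst (1) poly_as_sum_of_monoms[of s, symmetric]) (simp add: monom_sum)
    then show ?thesis
      using poly3_range_sum[of "{..degree s}" code "\<lambda>i. monom (monom (monom (coeff s i) i) j) k"]
        poly3_monom_surj by auto
  qed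
  have monom1: "\<exists>p. poly3 code p = monom r k" for r :: "complex poly poly" and k
  proof -
    have "monom r k = (\<Sum>j\<le>degree r. monom (monom (coeff r j) j) k)"
      by (subst (1) poly_as_sum_of_monoms[of r, symmetric]) (simp add: monom_sum)
    then show ?thesis
      using poly3_range_sum[of "{..degree r}" code "\<lambda>j. monom (monom (coeff r j) j) k"] monom2
      by auto
  qed
  have "t = (\<Sum>k\<le>degree t. monom (coeff t k) k)"
    by (simp add: poly_as_sum_of_monoms)
  then show ?thesis
    using poly3_range_sum[of "{..degree t}" code "\<lambda>k. monom (coeff t k) k"] monom1 by auto
qed

lemma dvd_iff_poly3_dvd: "p dvd q \<longleftrightarrow> poly3 code p dvd poly3 code q"
proof
  assume "poly3 code p dvd poly3 code q"
  then obtain t where t: "poly3 code q = poly3 code p * t" ..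
  obtain s where "poly3 code s = t" using poly3_surj by blast
  with t have "q = p * s" by (simp add: poly3_mult flip: poly3_inject)
  then show "p dvd q" ..
next
  assume "p dvd q"
  then obtain s where "q = p * s" ..
  then show "poly3 code p dvd poly3 code q" by (simp add: poly3_mult)
qed

lemma gcd_poly3_preimage:
  fixes g f1 f2 :: "'n cpoly"
  obtains D where "poly3 code D = gcd (poly3 code g) (gcd (poly3 code f1) (poly3 code f2))"
    "D dvd g" "D dvd f1" "D dvd f2"
proof -
  obtain D where D: "poly3 code D = gcd (poly3 code g) (gcd (poly3 code f1) (poly3 code f2))"
    using poly3_surj by blast
  show ?thesis
  proof (rule that[OF D])
    show "D dvd g" unfolding dvd_iff_poly3_dvd D by (rule gcd_dvd1)
    show "D dvd f1" unfolding dvd_iff_poly3_dvd D by (rule dvd_trans[OF gcd_dvd2 gcd_dvd1])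
    show "D dvd f2" unfolding dvd_iff_poly3_dvd D by (rule dvd_trans[OF gcd_dvd2 gcd_dvd2])
  qed
qed

lemma gcd_factorization:
  fixes g f1 f2 :: "'n cpoly"
  assumes "g \<noteq> 0"
  obtains D g' f1' f2' where "g = D * g'" "f1 = D * f1'" "f2 = D * f2'" "D \<noteq> 0"
    "no_common_factor g' f1' f2'"
proof -
  obtain D where D: "poly3 code D = gcd (poly3 code g) (gcd (poly3 code f1) (poly3 code f2))"
    "D dvd g" "D dvd f1" "D dvd f2"
    by (rule gcd_poly3_preimage)
  then obtain g' f1' f2' where fac: "g = D * g'" "f1 = D * f1'" "f2 = D * f2'"
    by (meson dvdE)
  have D0: "D \<noteq> 0" using assms fac by auto
  have "no_common_factor g' f1' f2'"
    unfolding no_common_factor_def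
  proof (intro allI impI)
    fix h assume "h dvd g'" "h dvd f1'" "h dvd f2'"
    then have "D * h dvd g" "D * h dvd f1" "D * h dvd f2"
      unfolding fac by (simp_all add: mult_dvd_mono)
    then have "poly3 code D * poly3 code h dvd poly3 code D * 1"
      by (simp add: D(1) dvd_iff_poly3_dvd poly3_mult)
    moreover have "poly3 code D \<noteq> 0" using D0 poly3_inject[of D 0] by simp
    ultimately have "poly3 code h dvd poly3 code 1" by (simp add: poly3_1)
    then show "h dvd 1" by (simp add: dvd_iff_poly3_dvd)
  qed
  with fac D0 show ?thesis by (rule that)
qed

lemma no_common_factor_dvd:
  fixes g f1 f2 :: "'n cpoly"
  assumes "no_common_factor g f1 f2" "f2 dvd x * g" "f2 dvd x * f1"
  shows "f2 dvd x"
proof -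
  let ?G = "gcd (poly3 code g) (gcd (poly3 code f1) (poly3 code f2))"
  obtain D where D: "poly3 code D = ?G" "D dvd g" "D dvd f1" "D dvd f2"
    by (rule gcd_poly3_preimage)
  with assms(1) have "D dvd 1" unfolding no_common_factor_def by blast
  then have "is_unit ?G" by (simp add: dvd_iff_poly3_dvd D(1) poly3_1)
  have "poly3 code f2 dvd poly3 code x * q"
    if "q \<in> {poly3 code g, poly3 code f1, poly3 code f2}" for q
    using that assms(2,3) by (auto simp: dvd_iff_poly3_dvd poly3_mult)
  then have "poly3 code f2 dvd gcd (poly3 code x * poly3 code g)
      (gcd (poly3 code x * poly3 code f1) (poly3 code x * poly3 code f2))"
    by simp
  then have "poly3 code f2 dvd poly3 code x * ?G"
    by (simp add: gcd_mult_left)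
  with \<open>is_unit ?G\<close> show ?thesis
    by (simp add: dvd_iff_poly3_dvd dvd_mult_unit_iff)
qed

end

lemma homogeneous_factors:
  fixes p q :: "'n::finite cpoly"
  assumes card: "CARD('n) \<le> 3" and hom: "homogeneous d (p * q)" and nz: "p * q \<noteq> 0"
  obtains k where "k \<le> d" "homogeneous k p" "homogeneous (d - k) q"
proof -
  define Dp Dq where "Dp = mon_deg ` keys p" and "Dq = mon_deg ` keys q"
  have "p \<noteq> 0" "q \<noteq> 0" using nz by auto
  then have fin: "finite Dp" "Dp \<noteq> {}" "finite Dq" "Dq \<noteq> {}" by (auto simp: Dp_def Dq_def)
  have extreme: "i + j = d" if "i \<in> Dp" "j \<in> Dq"
    and unique: "\<And>i' j'. i' \<in> Dp \<Longrightarrow> j' \<in> Dq \<Longrightarrow> i' + j' = i + j \<Longrightarrow> j' = j" for i j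
  proof -
    have "hom_part (i + j) (p * q) = hom_part i p * hom_part j q"
      using that by (intro hom_part_mult_extreme) (auto simp: Dp_def Dq_def)
    also have "\<dots> \<noteq> 0"
      using that(1,2) by (simp add: cpoly_mult_eq_0_iff[OF card] hom_part_ne_0_iff Dp_def Dq_def)
    finally show ?thesis using hom_part_homogeneous[OF hom, of "i + j"] by (auto split: if_splits)
  qed
  have "Max Dp + Max Dq = d"
  proof (rule extreme)
    fix i' j' assume "i' \<in> Dp" "j' \<in> Dq" "i' + j' = Max Dp + Max Dq"
    then show "j' = Max Dq" using Max_ge[OF fin(1), of i'] Max_ge[OF fin(3), of j'] by linarith
  qed (use fin in auto)
  moreover have "Min Dp + Min Dq = d"
  proof (rule extreme)
    fix i' j' assume "i' \<in> Dp" "j' \<in> Dq" "i' + j' = Min Dp + Min Dq"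
    then show "j' = Min Dq" using Min_le[OF fin(1), of i'] Min_le[OF fin(3), of j'] by linarith
  qed (use fin in auto)
  moreover have "Min Dp \<le> Max Dp" "Min Dq \<le> Max Dq" using fin by auto
  ultimately have "Min Dp = Max Dp" "Min Dq = Max Dq" by linarith+
  have deg_p: "i = Max Dp" if "i \<in> Dp" for i
    using Min_le[OF fin(1) that] Max_ge[OF fin(1) that] \<open>Min Dp = Max Dp\<close> by linarith
  have deg_q: "j = Max Dq" if "j \<in> Dq" for j
    using Min_le[OF fin(3) that] Max_ge[OF fin(3) that] \<open>Min Dq = Max Dq\<close> by linarith
  have "homogeneous (Max Dp) p" "homogeneous (Max Dq) q"
    unfolding homogeneous_def using deg_p deg_q by (simp_all add: Dp_def Dq_def)
  moreover have "Max Dq = d - Max Dp" using \<open>Max Dp + Max Dq = d\<close> by simp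
  ultimately show ?thesis using \<open>Max Dp + Max Dq = d\<close> by (intro that[of "Max Dp"]) simp_all
qed

lemma homogeneous_cofactor:
  fixes f q :: "'n::finite cpoly"
  assumes card: "CARD('n) \<le> 3" and f: "homogeneous m f" "f \<noteq> 0"
    and qf: "homogeneous d (q * f)"
  shows "homogeneous (d - m) q"
proof (cases "q = 0")
  case False
  then have "q * f \<noteq> 0" using f(2) by (simp add: cpoly_mult_eq_0_iff[OF card])
  then obtain k where "k \<le> d" "homogeneous k q" "homogeneous (d - k) f"
    using homogeneous_factors[OF card qf] by blast
  moreover have "d - k = m" using calculation(3) f homogeneous_unique by blast
  ultimately have "d - m = k" by arith
  with \<open>homogeneous k q\<close> show ?thesis by simp
qed simp

lemma varexp_eq_iff [simp]: "varexp u = varexp v \<longleftrightarrow> u = v"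
  by (metis lookup_single_eq lookup_single_not_eq Zero_not_Suc)

lemma lookup_var_mult_add': "lookup (var v * p) (a + varexp v) = lookup p a"
  by (metis add.commute lookup_var_mult_add)

lemma lookup_var_mult_varexp_eq_0:
  "v \<noteq> u \<Longrightarrow> v \<noteq> u' \<Longrightarrow> lookup (var v * p) (varexp u + varexp u') = 0"
  by (rule lookup_var_mult_eq_0) (simp add: lookup_add lookup_single)

lemma linear_form_expansion:
  assumes "homogeneous 1 (p::'n::finite cpoly)"
  shows "p = (\<Sum>u\<in>UNIV. cvar (lookup p (varexp u)) u)"
proof (rule poly_mapping_eqI)
  fix a
  have "lookup (\<Sum>u\<in>UNIV. cvar (lookup p (varexp u)) u) a =
      (\<Sum>u\<in>UNIV. if a = varexp u then lookup p a else 0)"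
    by (auto simp: lookup_sum lookup_single when_def intro!: sum.cong)
  also have "\<dots> = lookup p a"
  proof (cases "\<exists>u. a = varexp u")
    case True
    then show ?thesis by auto
  next
    case False
    have "a \<notin> keys p"
    proof
      assume "a \<in> keys p"
      then have "mon_deg a = 1" using assms by (simp add: homogeneous_def)
      then obtain u where "a = varexp u" by (rule mon_deg_eq_1_imp)
      with False show False by blast
    qed
    with False show ?thesis by (simp add: in_keys_iff)
  qed
  finally show "lookup p a = lookup (\<Sum>u\<in>UNIV. cvar (lookup p (varexp u)) u) a" by simp
qed

lemma linear_form_eq_cvar:
  assumes "homogeneous 1 (p::'n::finite cpoly)" "\<And>u. u \<noteq> v \<Longrightarrow> lookup p (varexp u) = 0"
  shows "p = cvar (lookup p (varexp v)) v"
proof -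
  have "p = (\<Sum>u\<in>UNIV. cvar (lookup p (varexp u)) u)"
    by (rule linear_form_expansion[OF assms(1)])
  also have "\<dots> = (\<Sum>u\<in>UNIV. if u = v then cvar (lookup p (varexp v)) v else 0)"
    using assms(2) by (intro sum.cong) auto
  also have "\<dots> = cvar (lookup p (varexp v)) v" by simp
  finally show ?thesis .
qed

lemma linear_forms_var_mult_eq:
  fixes a b :: "'n::finite cpoly"
  assumes vw: "v \<noteq> w" and lin: "homogeneous 1 a" "homogeneous 1 b"
    and eq: "var w * a = var v * b"
  shows "\<exists>c. a = cvar c v \<and> b = cvar c w"
proof -
  have coeff_a: "lookup a (varexp u) = lookup (var v * b) (varexp w + varexp u)" for u
    using lookup_var_mult_add[of w a "varexp u"] eq by simp
  have coeff_b: "lookup b (varexp u) = lookup (var w * a) (varexp v + varexp u)" for u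
    using lookup_var_mult_add[of v b "varexp u"] eq by simp
  have "a = cvar (lookup a (varexp v)) v"
    using lin(1) vw by (intro linear_form_eq_cvar) (simp_all add: coeff_a lookup_var_mult_varexp_eq_0)
  moreover have "b = cvar (lookup b (varexp w)) w"
    using lin(2) vw by (intro linear_form_eq_cvar) (simp_all add: coeff_b lookup_var_mult_varexp_eq_0)
  moreover have "lookup b (varexp w) = lookup a (varexp v)"
    by (simp add: coeff_b lookup_var_mult_add')
  ultimately show ?thesis by auto
qed

lemma homogeneous_minor_cofactor:
  fixes f s a b :: "'n::finite cpoly"
  assumes "CARD('n) \<le> 3" "homogeneous m f" "f \<noteq> 0" "homogeneous 1 a" "homogeneous 1 b"
    and minor: "var v * a - var w * b = f * s"
  shows "homogeneous (2 - m) s"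
proof (rule homogeneous_cofactor[OF assms(1-3)])
  have "homogeneous (1 + 1) (var v * a - var w * b)"
    by (rule homogeneous_diff[OF homogeneous_var_mult homogeneous_var_mult]) (fact assms)+
  then have "homogeneous 2 (f * s)" unfolding minor by (simp add: numeral_2_eq_2)
  then show "homogeneous 2 (s * f)" by (simp only: mult.commute)
qed

lemma in_span_of_minor_relation:
  fixes g f1 f2 a a' b b' :: "'n::finite cpoly"
  assumes card: "CARD('n) \<le> 3" and vw: "v \<noteq> w"
    and rel: "var v * g = a * f1 + b * f2"
    and lin: "homogeneous 1 a" "homogeneous 1 a'" "homogeneous 1 b" "homogeneous 1 b'"
    and deg: "u = 0 \<and> u' = 0 \<or> homogeneous 1 f1 \<and> homogeneous 1 f2"
    and minor_a: "var w * a - var v * a' = f2 * (cvar u' v - cvar u w)"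
    and minor_b: "var w * b - var v * b' = - (f1 * (cvar u' v - cvar u w))"
  shows "\<exists>c d. g = const c * f1 + const d * f2"
proof -
  have lin_shift: "homogeneous 1 (const x * f)" if "x = u \<or> x = u'" "f = f1 \<or> f = f2" for x f
    using deg that by (auto intro: homogeneous_const_mult)
  have "var w * (a + const u * f2) - var v * (a' + const u' * f2) =
      (var w * a - var v * a') - f2 * (const u' * var v - const u * var w)"
    by (simp add: algebra_simps)
  also have "\<dots> = 0" by (simp add: minor_a const_mult_var)
  finally have "var w * (a + const u * f2) = var v * (a' + const u' * f2)" by simp
  moreover have "homogeneous 1 (a + const u * f2)" "homogeneous 1 (a' + const u' * f2)"
    using lin lin_shift by (auto intro: homogeneous_add)
  ultimately obtain c where c: "a + const u * f2 = cvar c v"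
    using linear_forms_var_mult_eq[OF vw] by blast
  have "var w * (b - const u * f1) - var v * (b' - const u' * f1) =
      (var w * b - var v * b') + f1 * (const u' * var v - const u * var w)"
    by (simp add: algebra_simps)
  also have "\<dots> = 0" by (simp add: minor_b const_mult_var)
  finally have "var w * (b - const u * f1) = var v * (b' - const u' * f1)" by simp
  moreover have "homogeneous 1 (b - const u * f1)" "homogeneous 1 (b' - const u' * f1)"
    using lin lin_shift by (auto intro: homogeneous_diff)
  ultimately obtain d where d: "b - const u * f1 = cvar d v"
    using linear_forms_var_mult_eq[OF vw] by blast
  have "var v * (g - (const c * f1 + const d * f2)) =
      var v * g - (const c * var v * f1 + const d * var v * f2)"
    by (simp add: algebra_simps)
  also have "\<dots> =
      (a + const u * f2 - const c * var v) * f1 + (b - const u * f1 - const d * var v) * f2"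
    unfolding rel by (simp add: algebra_simps)
  also have "\<dots> = 0" by (simp add: c d const_mult_var)
  finally show ?thesis using card by (auto simp: cpoly_mult_eq_0_iff var_ne_0)
qed

lemma in_span_one_generator:
  fixes g f :: "'n::finite cpoly" and v w :: 'n
  assumes card: "CARD('n) \<le> 3" and vw: "v \<noteq> w"
    and rel: "\<And>v. \<exists>l. homogeneous 1 l \<and> var v * g = l * f"
  shows "\<exists>c. g = const c * f"
proof (cases "f = 0")
  case True
  with rel[of v] have "g = 0" by (auto simp: cpoly_mult_eq_0_iff[OF card] var_ne_0)
  with True show ?thesis by simp
next
  case False
  obtain l l' where l: "homogeneous 1 l" "var v * g = l * f"
    and l': "homogeneous 1 l'" "var w * g = l' * f"
    using rel[of v] rel[of w] by blast
  have "(var w * l - var v * l') * f = var w * (l * f) - var v * (l' * f)"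
    by (simp add: algebra_simps)
  also have "\<dots> = var w * (var v * g) - var v * (var w * g)" by (simp only: l(2) l'(2))
  also have "\<dots> = 0" by (simp add: algebra_simps)
  finally have "var w * l = var v * l'" using False by (simp add: cpoly_mult_eq_0_iff[OF card])
  then obtain c where c: "l = cvar c v" using linear_forms_var_mult_eq[OF vw l(1) l'(1)] by blast
  have "var v * (g - const c * f) = var v * g - (const c * var v) * f"
    by (simp add: algebra_simps)
  also have "\<dots> = 0" by (simp add: l(2) c const_mult_var)
  finally show ?thesis using card by (auto simp: cpoly_mult_eq_0_iff var_ne_0)
qed

lemma relation_cancel_factor:
  fixes D g f1 f2 x a b :: "'n::finite cpoly"
  assumes "CARD('n) \<le> 3" "D \<noteq> 0" "x * (D * g) = a * (D * f1) + b * (D * f2)"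
  shows "x * g = a * f1 + b * f2"
proof -
  have "D * (x * g - (a * f1 + b * f2)) = x * (D * g) - (a * (D * f1) + b * (D * f2))"
    by (simp add: algebra_simps)
  with assms show ?thesis by (simp add: cpoly_mult_eq_0_iff)
qed

lemma relation_minors:
  fixes g f1 f2 :: "'a::comm_ring_1"
  assumes rel_p: "p * g = a * f1 + b * f2" and rel_q: "q * g = a' * f1 + b' * f2"
  shows "(p * a' - q * a) * g = f2 * (a' * b - a * b')"
    and "(p * a' - q * a) * f1 = - (f2 * (p * b' - q * b))"
proof -
  have "(p * a' - q * a) * g = a' * (p * g) - a * (q * g)" by (simp add: algebra_simps)
  also have "\<dots> = f2 * (a' * b - a * b')" unfolding rel_p rel_q by (simp add: algebra_simps)
  finally show "(p * a' - q * a) * g = f2 * (a' * b - a * b')" .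
  have "(p * a' - q * a) * f1 =
      p * (a' * f1 + b' * f2) - q * (a * f1 + b * f2) - f2 * (p * b' - q * b)"
    by (simp add: algebra_simps)
  also have "\<dots> = p * (q * g) - q * (p * g) - f2 * (p * b' - q * b)"
    by (simp only: rel_p rel_q)
  also have "\<dots> = - (f2 * (p * b' - q * b))" by (simp add: algebra_simps)
  finally show "(p * a' - q * a) * f1 = - (f2 * (p * b' - q * b))" .
qed

subsection \<open>Two generators in three variables\<close>

locale three_vars =
  fixes v0 v1 v2 :: "'n::finite"
  assumes distinct: "v0 \<noteq> v1" "v0 \<noteq> v2" "v1 \<noteq> v2" and UNIV_eq: "UNIV = {v0, v1, v2}"

sublocale three_vars \<subseteq> var_coding_onto "\<lambda>v. if v = v0 then 0 else if v = v1 then 1 else 2"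
proof unfold_locales
  have cases: "v = v0 \<or> v = v1 \<or> v = v2" for v using UNIV_eq by blast
  show "inj (\<lambda>v. if v = v0 then 0 else if v = v1 then 1 else 2 :: nat)"
  proof (rule injI)
    fix x y :: 'n
    assume "(if x = v0 then 0 else if x = v1 then 1 else 2 :: nat) =
      (if y = v0 then 0 else if y = v1 then 1 else 2)"
    then show "x = y" using cases[of x] cases[of y] distinct by (auto split: if_splits)
  qed
  show "(if v = v0 then 0 else if v = v1 then 1 else 2) < (3::nat)" for v by simp
  show "\<exists>v. (if v = v0 then 0 else if v = v1 then 1 else 2) = k" if "k < 3" for k :: nat
  proof -
    have "k = 0 \<or> k = 1 \<or> k = 2" using that by auto
    then show ?thesis using distinct by metis
  qed
qed

context three_vars
begin

lemma card_le_3: "CARD('n) \<le> 3"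
  by (simp add: UNIV_eq card_insert_if)

lemma linear_form_eq3:
  assumes "homogeneous 1 p" "lookup p (varexp v0) = x0" "lookup p (varexp v1) = x1"
    "lookup p (varexp v2) = x2"
  shows "p = cvar x0 v0 + cvar x1 v1 + cvar x2 v2"
proof -
  have "p = (\<Sum>u\<in>UNIV. cvar (lookup p (varexp u)) u)"
    by (rule linear_form_expansion[OF assms(1)])
  also have "\<dots> = (\<Sum>u\<in>{v0, v1, v2}. cvar (lookup p (varexp u)) u)"
    by (simp only: UNIV_eq)
  also have "\<dots> = cvar x0 v0 + cvar x1 v1 + cvar x2 v2"
    using distinct assms(2-4) by (simp add: add.assoc)
  finally show ?thesis .
qed

lemma linear_syzygy:
  assumes lin: "homogeneous 1 c0" "homogeneous 1 c1" "homogeneous 1 c2"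
    and syz: "var v0 * c0 + var v1 * c1 + var v2 * c2 = 0"
  obtains u0 u1 u2 where "c0 = cvar u1 v2 - cvar u2 v1" "c1 = cvar u2 v0 - cvar u0 v2"
    "c2 = cvar u0 v1 - cvar u1 v0"
proof -
  have coeff: "lookup (var v0 * c0 + var v1 * c1 + var v2 * c2) (varexp x + varexp y) = 0" for x y
    using syz by simp
  note simps = lookup_add lookup_var_mult_add lookup_var_mult_add' lookup_var_mult_varexp_eq_0
    distinct distinct[symmetric]
  have diag: "lookup c0 (varexp v0) = 0" "lookup c1 (varexp v1) = 0" "lookup c2 (varexp v2) = 0"
    using coeff[of v0 v0] coeff[of v1 v1] coeff[of v2 v2] by (simp_all add: simps)
  have off: "lookup c0 (varexp v1) = - lookup c1 (varexp v0)"
    "lookup c2 (varexp v0) = - lookup c0 (varexp v2)" "lookup c1 (varexp v2) = - lookup c2 (varexp v1)"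
    using coeff[of v0 v1] coeff[of v0 v2] coeff[of v1 v2]
    by (simp_all add: simps eq_neg_iff_add_eq_0 add.commute)
  have "c0 = cvar 0 v0 + cvar (- lookup c1 (varexp v0)) v1 + cvar (lookup c0 (varexp v2)) v2"
    by (rule linear_form_eq3[OF lin(1)]) (simp_all add: diag off)
  moreover have "c1 = cvar (lookup c1 (varexp v0)) v0 + cvar 0 v1 + cvar (- lookup c2 (varexp v1)) v2"
    by (rule linear_form_eq3[OF lin(2)]) (simp_all add: diag off)
  moreover have "c2 = cvar (- lookup c0 (varexp v2)) v0 + cvar (lookup c2 (varexp v1)) v1 + cvar 0 v2"
    by (rule linear_form_eq3[OF lin(3)]) (simp_all add: diag off)
  ultimately have "c0 = cvar (lookup c0 (varexp v2)) v2 - cvar (lookup c1 (varexp v0)) v1"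
    "c1 = cvar (lookup c1 (varexp v0)) v0 - cvar (lookup c2 (varexp v1)) v2"
    "c2 = cvar (lookup c2 (varexp v1)) v1 - cvar (lookup c0 (varexp v2)) v0"
    by (simp_all add: single_uminus)
  then show ?thesis by (rule that)
qed

lemma constant_syzygy:
  assumes "homogeneous 0 c0" "homogeneous 0 c1" "homogeneous 0 c2"
    and syz: "var v0 * c0 + var v1 * c1 + var v2 * c2 = 0"
  shows "c0 = 0 \<and> c1 = 0 \<and> c2 = 0"
proof -
  obtain x0 x1 x2 where const: "c0 = const x0" "c1 = const x1" "c2 = const x2"
    using assms(1-3) homogeneous_0_imp_const by blast
  with syz have "cvar x0 v0 + cvar x1 v1 + cvar x2 v2 = 0"
    by (simp add: mult_single)
  then have "lookup (cvar x0 v0 + cvar x1 v1 + cvar x2 v2) (varexp x) = 0" for x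
    by simp
  from this[of v0] this[of v1] this[of v2] distinct have "x0 = 0" "x1 = 0" "x2 = 0"
    by (auto simp: lookup_add lookup_single)
  with const show ?thesis by simp
qed

lemma syzygy_entry_shape:
  assumes "m \<noteq> 0"
    and hs: "homogeneous (2 - m) s0" "homogeneous (2 - m) s1" "homogeneous (2 - m) s2"
    and syz: "var v0 * s0 + var v1 * s1 + var v2 * s2 = 0"
  obtains u u' where "s1 = cvar u' v0 - cvar u v2" "u = 0 \<and> u' = 0 \<or> m = 1"
proof (cases "m = 1")
  case True
  with hs have "homogeneous 1 s0" "homogeneous 1 s1" "homogeneous 1 s2" by simp_all
  then obtain u0 u2 where "s1 = cvar u2 v0 - cvar u0 v2"
    using linear_syzygy[OF _ _ _ syz] by blast
  with True show ?thesis by (intro that) simp_all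
next
  case False
  \<comment> \<open>For m \<ge> 2 the truncated difference 2 - m is 0: the entries are constants, hence 0.\<close>
  with \<open>m \<noteq> 0\<close> hs have "homogeneous 0 s0" "homogeneous 0 s1" "homogeneous 0 s2"
    by simp_all
  then have "s1 = 0" using constant_syzygy syz by blast
  then show ?thesis using that[of 0 0] by simp
qed

lemma minor_cofactors:
  fixes g f1 f2 :: "'n cpoly"
  assumes f2: "f2 \<noteq> 0" and coprime: "no_common_factor g f1 f2"
    and rel0: "var v0 * g = a0 * f1 + b0 * f2" and rel1: "var v1 * g = a1 * f1 + b1 * f2"
    and rel2: "var v2 * g = a2 * f1 + b2 * f2"
  obtains s0 s1 s2 where "var v1 * a2 - var v2 * a1 = f2 * s0"
    "var v2 * a0 - var v0 * a2 = f2 * s1" "var v0 * a1 - var v1 * a0 = f2 * s2"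
    "var v2 * b0 - var v0 * b2 = - (f1 * s1)"
    "var v0 * s0 + var v1 * s1 + var v2 * s2 = 0"
proof -
  have cofactor: "\<exists>s. X = f2 * s \<and> Y = - (f1 * s)"
    if "X * g = f2 * W" "X * f1 = - (f2 * Y)" for X Y W
  proof -
    have "f2 dvd X"
    proof (rule no_common_factor_dvd[OF coprime])
      show "f2 dvd X * g" using that(1) by (metis dvd_triv_left)
      show "f2 dvd X * f1" using that(2) by (metis dvd_minus_iff dvd_triv_left)
    qed
    then obtain s where s: "X = f2 * s" ..
    have "f2 * (s * f1 + Y) = X * f1 + f2 * Y" using s by (simp add: algebra_simps)
    also have "\<dots> = 0" using that(2) by simp
    finally have "Y = - (f1 * s)"
      using f2 by (simp add: cpoly_mult_eq_0_iff[OF card_le_3] add_eq_0_iff mult.commute)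
    with s show ?thesis by blast
  qed
  obtain s0 where s0: "var v1 * a2 - var v2 * a1 = f2 * s0"
    using cofactor[OF relation_minors[OF rel1 rel2]] by blast
  obtain s1 where s1: "var v2 * a0 - var v0 * a2 = f2 * s1"
    "var v2 * b0 - var v0 * b2 = - (f1 * s1)"
    using cofactor[OF relation_minors[OF rel2 rel0]] by blast
  obtain s2 where s2: "var v0 * a1 - var v1 * a0 = f2 * s2"
    using cofactor[OF relation_minors[OF rel0 rel1]] by blast
  have "f2 * (var v0 * s0 + var v1 * s1 + var v2 * s2) =
      var v0 * (var v1 * a2 - var v2 * a1) + var v1 * (var v2 * a0 - var v0 * a2)
      + var v2 * (var v0 * a1 - var v1 * a0)"
    unfolding s0 s1(1) s2 by (simp add: algebra_simps)
  also have "\<dots> = 0" by (simp add: algebra_simps)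
  finally have "var v0 * s0 + var v1 * s1 + var v2 * s2 = 0"
    using f2 by (simp add: cpoly_mult_eq_0_iff[OF card_le_3])
  then show ?thesis by (rule that[OF s0 s1(1) s2 s1(2)])
qed

lemma in_span_two_generators_coprime:
  fixes g f1 f2 :: "'n cpoly"
  assumes hg: "homogeneous m g" and hf1: "homogeneous m f1" and hf2: "homogeneous m f2"
    and f2: "f2 \<noteq> 0" and coprime: "no_common_factor g f1 f2"
    and rel: "\<And>v. \<exists>a b. homogeneous 1 a \<and> homogeneous 1 b \<and> var v * g = a * f1 + b * f2"
  shows "\<exists>c d. g = const c * f1 + const d * f2"
proof (cases "m = 0")
  case True
  obtain \<gamma> \<phi> where "g = const \<gamma>" "f2 = const \<phi>"
    using True hg hf2 homogeneous_0_imp_const by blast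
  moreover from this(2) f2 have "\<phi> \<noteq> 0" by auto
  ultimately have "g = const 0 * f1 + const (\<gamma> / \<phi>) * f2" by (simp add: mult_single)
  then show ?thesis by blast
next
  case False
  obtain a0 b0 where lin0: "homogeneous 1 a0" "homogeneous 1 b0"
    and rel0: "var v0 * g = a0 * f1 + b0 * f2" using rel by blast
  obtain a1 b1 where lin1: "homogeneous 1 a1" "homogeneous 1 b1"
    and rel1: "var v1 * g = a1 * f1 + b1 * f2" using rel by blast
  obtain a2 b2 where lin2: "homogeneous 1 a2" "homogeneous 1 b2"
    and rel2: "var v2 * g = a2 * f1 + b2 * f2" using rel by blast
  obtain s0 s1 s2 where minors: "var v1 * a2 - var v2 * a1 = f2 * s0"
    "var v2 * a0 - var v0 * a2 = f2 * s1" "var v0 * a1 - var v1 * a0 = f2 * s2"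
    "var v2 * b0 - var v0 * b2 = - (f1 * s1)"
    and syz: "var v0 * s0 + var v1 * s1 + var v2 * s2 = 0"
    using minor_cofactors[OF f2 coprime rel0 rel1 rel2] .
  note minor_cofactor = homogeneous_minor_cofactor[OF card_le_3 hf2 f2]
  have hs: "homogeneous (2 - m) s0" "homogeneous (2 - m) s1" "homogeneous (2 - m) s2"
    using minor_cofactor[OF lin2(1) lin1(1) minors(1)] minor_cofactor[OF lin0(1) lin2(1) minors(2)]
      minor_cofactor[OF lin1(1) lin0(1) minors(3)] .
  obtain u u' where s1: "s1 = cvar u' v0 - cvar u v2" and deg: "u = 0 \<and> u' = 0 \<or> m = 1"
    using syzygy_entry_shape[OF \<open>m \<noteq> 0\<close> hs syz] .
  show ?thesis
  proof (rule in_span_of_minor_relation[OF card_le_3 distinct(2) rel0 lin0(1) lin2(1) lin0(2) lin2(2)])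
    show "u = 0 \<and> u' = 0 \<or> homogeneous 1 f1 \<and> homogeneous 1 f2" using deg hf1 hf2 by auto
  qed (use minors s1 in auto)
qed

lemma in_span_two_generators:
  fixes g f1 f2 :: "'n cpoly"
  assumes hg: "homogeneous m g" and hf1: "homogeneous m f1" and hf2: "homogeneous m f2"
    and rel: "\<And>v. \<exists>a b. homogeneous 1 a \<and> homogeneous 1 b \<and> var v * g = a * f1 + b * f2"
  shows "\<exists>c d. g = const c * f1 + const d * f2"
proof -
  consider "g = 0" | "f2 = 0" | "g \<noteq> 0" "f2 \<noteq> 0" by blast
  then show ?thesis
  proof cases
    case 1
    then show ?thesis by (intro exI[of _ 0]) simp
  next
    case 2
    have "\<exists>c. g = const c * f1"
      by (rule in_span_one_generator[OF card_le_3 distinct(1)]) (use rel 2 in auto)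
    with 2 show ?thesis by auto
  next
    case 3
    obtain D g' f1' f2' where fac: "g = D * g'" "f1 = D * f1'" "f2 = D * f2'" and "D \<noteq> 0"
      and coprime: "no_common_factor g' f1' f2'"
      using gcd_factorization[OF 3(1)] .
    have "homogeneous m (D * g')" "D * g' \<noteq> 0" using hg 3(1) fac(1) by simp_all
    then obtain k where "k \<le> m" "homogeneous k D" and hg': "homogeneous (m - k) g'"
      by (rule homogeneous_factors[OF card_le_3])
    have hf': "homogeneous (m - k) f1'" "homogeneous (m - k) f2'"
      using homogeneous_cofactor[OF card_le_3 \<open>homogeneous k D\<close> \<open>D \<noteq> 0\<close>] hf1 hf2 fac
      by (simp_all add: mult.commute)
    have rel': "\<exists>a b. homogeneous 1 a \<and> homogeneous 1 b \<and> var v * g' = a * f1' + b * f2'" for v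
      using rel[of v, unfolded fac] relation_cancel_factor[OF card_le_3 \<open>D \<noteq> 0\<close>] by blast
    have "f2' \<noteq> 0" using 3(2) fac(3) by auto
    then obtain c d where "g' = const c * f1' + const d * f2'"
      using in_span_two_generators_coprime[OF hg' hf' _ coprime rel'] by blast
    then have "g = const c * f1 + const d * f2" by (simp add: fac algebra_simps)
    then show ?thesis by blast
  qed
qed

end

subsection \<open>The ideal condition and linear independence\<close>

lemma homogeneous_gen_ideal_element:
  fixes f :: "nat \<Rightarrow> 'n::finite cpoly"
  assumes hf: "\<forall>i<P. homogeneous m (f i)" and p: "p \<in> gen_ideal P f"
    and hp: "homogeneous (m + k) p"
  shows "\<exists>l. (\<forall>i. homogeneous k (l i)) \<and> p = (\<Sum>i<P. l i * f i)"
proof -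
  obtain h where h: "p = (\<Sum>i<P. h i * f i)" using p by (auto simp: gen_ideal_def)
  have "p = hom_part (m + k) p" using hp by (simp add: homogeneous_iff_hom_part)
  also have "\<dots> = (\<Sum>i<P. hom_part (m + k) (h i * f i))" by (simp add: h hom_part_sum)
  also have "\<dots> = (\<Sum>i<P. hom_part k (h i) * f i)"
  proof (intro sum.cong refl)
    fix i assume "i \<in> {..<P}"
    then have "homogeneous m (f i)" using hf by simp
    from hom_part_mult_homogeneous[OF this, of "m + k" "h i"]
    show "hom_part (m + k) (h i * f i) = hom_part k (h i) * f i" by simp
  qed
  finally have "p = (\<Sum>i<P. hom_part k (h i) * f i)" .
  then show ?thesis by (intro exI[of _ "\<lambda>i. hom_part k (h i)"]) (simp add: homogeneous_hom_part)
qed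

lemma var_mult_linear_combination:
  fixes f :: "nat \<Rightarrow> 'n::finite cpoly"
  assumes hf: "\<forall>i<P. homogeneous m (f i)" and hg: "homogeneous m g"
    and incl: "hom_comp (gen_ideal 1 (\<lambda>_. g)) (m + 1) \<subseteq> hom_comp (gen_ideal P f) (m + 1)"
  shows "\<exists>l. (\<forall>i. homogeneous 1 (l i)) \<and> var v * g = (\<Sum>i<P. l i * f i)"
proof -
  have "var v * g \<in> hom_comp (gen_ideal 1 (\<lambda>_. g)) (m + 1)"
    using homogeneous_var_mult[OF hg]
    by (auto simp: hom_comp_def gen_ideal_def intro: exI[of _ "\<lambda>_. var v"])
  with incl have "var v * g \<in> gen_ideal P f" "homogeneous (m + 1) (var v * g)"
    by (auto simp: hom_comp_def)
  then show ?thesis by (rule homogeneous_gen_ideal_element[OF hf])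
qed

lemma lin_indep_fam_not_in_span:
  assumes "lin_indep_fam P f g"
  shows "g \<noteq> (\<Sum>i<P. const (c i) * f i)"
proof
  assume "g = (\<Sum>i<P. const (c i) * f i)"
  then have "(\<Sum>i<P. cscale (- c i) (f i)) + cscale 1 g = 0"
    by (simp add: cscale_eq_const_mult single_uminus sum_negf)
  from assms[unfolded lin_indep_fam_def, rule_format, OF this] show False by simp
qed

lemma in_span_of_var_relations:
  fixes f :: "nat \<Rightarrow> 'n::finite cpoly"
  assumes card: "CARD('n) \<le> 3" and P: "P < CARD('n)"
    and hf: "\<forall>i<P. homogeneous m (f i)" and hg: "homogeneous m g"
    and rel: "\<And>v. \<exists>l. (\<forall>i. homogeneous 1 (l i)) \<and> var v * g = (\<Sum>i<P. l i * f i)"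
  shows "\<exists>c. g = (\<Sum>i<P. const (c i) * f i)"
proof -
  consider "P = 0" | "P = 1" | "P = 2" using P card by linarith
  then show ?thesis
  proof cases
    case 1
    fix v :: 'n
    from rel[of v] 1 have "g = 0" by (auto simp: cpoly_mult_eq_0_iff[OF card] var_ne_0)
    with 1 show ?thesis by simp
  next
    case 2
    with P have "\<not> CARD('n) \<le> Suc 0" by simp
    then obtain v w :: 'n where "v \<noteq> w"
      using card_le_Suc0_iff_eq[of "UNIV :: 'n set"] by auto
    have "\<exists>l. homogeneous 1 l \<and> var u * g = l * f 0" for u
      using rel[of u] 2 by auto
    then obtain c where "g = const c * f 0" using in_span_one_generator[OF card \<open>v \<noteq> w\<close>] by blast
    with 2 show ?thesis by (intro exI[of _ "\<lambda>_. c"]) simp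
  next
    case 3
    then obtain v0 v1 v2 :: 'n where "UNIV = {v0, v1, v2}" "v0 \<noteq> v1" "v1 \<noteq> v2" "v0 \<noteq> v2"
      using P card card_3_iff[of "UNIV :: 'n set"] by auto
    then interpret three_vars v0 v1 v2 by unfold_locales auto
    have "\<exists>a b. homogeneous 1 a \<and> homogeneous 1 b \<and> var u * g = a * f 0 + b * f 1" for u
    proof -
      obtain l where "\<forall>i. homogeneous 1 (l i)" "var u * g = (\<Sum>i<P. l i * f i)" using rel by blast
      with 3 show ?thesis by (intro exI[of _ "l 0"] exI[of _ "l 1"]) (simp add: numeral_2_eq_2)
    qed
    then obtain c d where "g = const c * f 0 + const d * f 1"
      using in_span_two_generators[of m g "f 0" "f 1"] hg hf 3 by auto
    with 3 show ?thesis
      by (intro exI[of _ "\<lambda>i. if i = 0 then c else d"]) (simp add: numeral_2_eq_2)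
  qed
qed

theorem proposition2:
  fixes f :: "nat \<Rightarrow> ('n::finite) cpoly" and g :: "'n cpoly" and P m :: nat
  assumes "CARD('n) \<le> 3"
    and "\<forall>i<P. homogeneous m (f i)"
    and "homogeneous m g"
    and "lin_indep_fam P f g"
    and "hom_comp (gen_ideal 1 (\<lambda>_. g)) (m + 1) \<subseteq> hom_comp (gen_ideal P f) (m + 1)"
  shows "P \<ge> CARD('n)"
proof (rule ccontr)
  assume "\<not> P \<ge> CARD('n)"
  then have "P < CARD('n)" by simp
  moreover have "\<exists>l. (\<forall>i. homogeneous 1 (l i)) \<and> var v * g = (\<Sum>i<P. l i * f i)" for v
    by (rule var_mult_linear_combination[OF assms(2,3,5)])
  ultimately obtain c where "g = (\<Sum>i<P. const (c i) * f i)"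
    using in_span_of_var_relations[OF assms(1) _ assms(2,3)] by blast
  with lin_indep_fam_not_in_span[OF assms(4)] show False by blast
qed

end
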